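(* Fix $j\ge1$. For every $k\ge6$ with $k+1\ge j$, $A(k)<C(k)$, where $$C(k)=\log\big((k+1)(\log(k+1)+\log\log(k+1))\big)\cdot\exp\!\left(c_1-\frac1{p_j}+\frac{5}{\log\big((k+1)(\log(k+1)+\log\log(k+1)-1)\big)}\right).$$
   Context: $p_1=2<p_2=3<\cdots$ is the increasing enumeration of the primes. For fixed $j$ and $k\ge j-1$, $A(k)=\prod_{1\le\ell\le k+1,\ \ell\ne j}\frac{p_\ell+1}{p_\ell}$. The constant $c_1\approx0.261497$ is the Meissel–Mertens constant, $c_1=\lim_{x\to\infty}\big(\sum_{p\le x}1/p-\log\log x\big)$. *)

theory Defs
  imports "HOL-Analysis.Analysis" "HOL-Library.Infinite_Set"
begin

text \<open>The l-th prime (1-indexed): pr 1 = 2, pr 2 = 3, ...\<close>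
definition pr :: "nat \<Rightarrow> nat" where
  "pr l = enumerate {p. prime p} (l - 1)"

definition mertens_c1 :: real where
  "mertens_c1 = Lim at_top (\<lambda>x::real. (\<Sum>p | prime p \<and> real p \<le> x. 1 / real p) - ln (ln x))"

definition A_prod :: "nat \<Rightarrow> nat \<Rightarrow> real" where
  "A_prod j k = (\<Prod>l \<in> {1..k+1} - {j}. (real (pr l) + 1) / real (pr l))"

definition C_bound :: "nat \<Rightarrow> nat \<Rightarrow> real" where
  "C_bound j k = ln ((real k + 1) * (ln (real k + 1) + ln (ln (real k + 1)))) *
     exp (mertens_c1 - 1 / real (pr j) +
          5 / ln ((real k + 1) * (ln (real k + 1) + ln (ln (real k + 1)) - 1)))"

end

(* Since ln (1 + 1/p) < 1/p, the logarithm of A(k) is less than the sum of 1/p over the primes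
   p <= p_(k+1), minus 1/p_j.  That sum is bounded by Mertens' second theorem with an explicit error
   term, sum_(p <= x) 1/p <= ln ln x + c1 + delta(x)/ln x with delta(x) <= 27/10 for x >= 17.  It is
   obtained by partial summation from Mertens' first theorem |sum_(p <= n) ln p/p - ln n| <= 3, which in
   turn follows from Legendre's formula for n!, elementary bounds for ln n! and Chebyshev's bound
   theta(n) <= n ln 4; the same partial summation shows that c1 exists.  Chebyshev's lower bound for the
   number of primes, read off from the central binomial coefficient, gives p_n <= 5 n (ln n + ln ln n),
   which is all that is needed to compare ln ln p_(k+1) with the logarithm in C(k). *)

theory Submission
  imports Defs "HOL-Real_Asymp.Real_Asymp"
begin

lemma ln_le_ln_plus_div_minus_1:
  fixes a b :: real
  assumes "a > 0" "b > 0"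
  shows "ln a \<le> ln b + a / b - 1"
  using ln_le_minus_one[of "a / b"] assms by (simp add: ln_div)

lemma ln_add_1_minus_ln_bounds:
  fixes x :: real
  assumes "x > 0"
  shows "1 / (x + 1) \<le> ln (x + 1) - ln x" "ln (x + 1) - ln x \<le> 1 / x"
  using ln_le_ln_plus_div_minus_1[of x "x + 1"] ln_le_ln_plus_div_minus_1[of "x + 1" x] assms
  by (simp_all add: field_simps)

lemma ln_4_bounds: "4 / 3 \<le> ln (4::real)" "ln (4::real) \<le> 25 / 18"
  using ln_realpow[of 2 2] ln2_ge_two_thirds ln2_le_25_over_36 by simp_all

section \<open>Legendre's formula and bounds for $\ln n!$\<close>

lemma multiplicity_eq_card_prime_power_dvd:
  fixes p m B :: nat
  assumes "prime p" "m > 0" "m \<le> B"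
  shows "multiplicity p m = card {k \<in> {1..B}. p ^ k dvd m}"
proof -
  have "multiplicity p m < 2 ^ multiplicity p m" by simp
  also have "\<dots> \<le> p ^ multiplicity p m"
    using prime_ge_2_nat[OF assms(1)] by (simp add: power_mono)
  also have "\<dots> \<le> m"
    using assms by (intro dvd_imp_le multiplicity_dvd) auto
  finally have "{k \<in> {1..B}. p ^ k dvd m} = {1..multiplicity p m}"
    using assms by (auto intro: multiplicity_dvd' intro!: multiplicity_geI simp: prime_gt_1_nat)
  then show ?thesis by simp
qed

lemma multiplicity_fact_eq_sum_div:
  fixes p n B :: nat
  assumes "prime p" "n \<le> B"
  shows "multiplicity p (fact n) = (\<Sum>k=1..B. n div p ^ k)"
  using assms(2)
proof (induction n)
  case 0
  then show ?case by simp
next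
  case (Suc n)
  have "multiplicity p (fact (Suc n) :: nat) = multiplicity p (Suc n * fact n)"
    by (simp add: fact_Suc)
  also have "\<dots> = multiplicity p (Suc n) + multiplicity p (fact n :: nat)"
    using assms(1) by (subst prime_elem_multiplicity_mult_distrib) auto
  also have "multiplicity p (Suc n) = (\<Sum>k=1..B. if p ^ k dvd Suc n then 1 else 0)"
    using multiplicity_eq_card_prime_power_dvd[OF assms(1), of "Suc n" B] Suc.prems
    by (simp add: sum.If_cases Int_def conj_commute)
  also have "multiplicity p (fact n :: nat) = (\<Sum>k=1..B. n div p ^ k)"
    using Suc by simp
  also have "(\<Sum>k=1..B. if p ^ k dvd Suc n then 1 else 0) + (\<Sum>k=1..B. n div p ^ k)
      = (\<Sum>k=1..B. Suc n div p ^ k)"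
    unfolding sum.distrib[symmetric] using prime_gt_0_nat[OF assms(1)]
    by (intro sum.cong) (auto simp: div_Suc dvd_eq_mod_eq_0)
  finally show ?case .
qed

lemma multiplicity_fact_ge:
  assumes "prime p"
  shows "real n / real p - 1 \<le> real (multiplicity p (fact n :: nat))"
proof (cases "n = 0")
  case True
  then show ?thesis by simp
next
  case False
  have p: "p > 0" using prime_gt_0_nat[OF assms] .
  have "n div p ^ 1 \<le> (\<Sum>k=1..n. n div p ^ k)"
    using False by (intro member_le_sum) auto
  then have "n div p \<le> multiplicity p (fact n :: nat)"
    using multiplicity_fact_eq_sum_div[OF assms, of n n] by simp
  have "real n = real p * real (n div p) + real (n mod p)"
    by (metis div_mult_mod_eq mult.commute of_nat_add of_nat_mult)
  then have "real n < real p * (real (n div p) + 1)"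
    using p by (simp add: algebra_simps)
  also have "\<dots> \<le> real p * (real (multiplicity p (fact n :: nat)) + 1)"
    using \<open>n div p \<le> _\<close> by (intro mult_left_mono) auto
  finally show ?thesis
    using p by (simp add: field_simps)
qed

lemma multiplicity_fact_le:
  assumes "prime p"
  shows "real (multiplicity p (fact n :: nat)) \<le> real n / (real p - 1)"
proof -
  have p: "real p \<ge> 2" using prime_ge_2_nat[OF assms] by simp
  define q where "q = 1 / real p"
  have q: "0 < q" "q < 1" using p by (auto simp: q_def)
  have "real (multiplicity p (fact n :: nat)) = (\<Sum>k=1..n. real (n div p ^ k))"
    using multiplicity_fact_eq_sum_div[OF assms, of n n] by simp
  also have "\<dots> \<le> (\<Sum>k=1..n. real n * q ^ k)"
  proof (rule sum_mono)
    fix k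
    have "real (n div p ^ k) * real p ^ k \<le> real n"
      by (metis div_times_less_eq_dividend of_nat_le_iff of_nat_mult of_nat_power)
    then have "real (n div p ^ k) \<le> real n / real p ^ k"
      using p by (simp add: field_simps)
    then show "real (n div p ^ k) \<le> real n * q ^ k"
      by (simp add: q_def power_one_over)
  qed
  also have "\<dots> = real n * (\<Sum>k=1..n. q ^ k)"
    by (simp add: sum_distrib_left)
  also have "\<dots> \<le> real n * (q / (1 - q))"
  proof (intro mult_left_mono)
    have "(\<Sum>k=1..n. q ^ k) \<le> (q - q ^ Suc n) / (1 - q)"
      using q by (simp add: sum_gp)
    also have "\<dots> \<le> q / (1 - q)"
      using q by (intro divide_right_mono) auto
    finally show "(\<Sum>k=1..n. q ^ k) \<le> q / (1 - q)" .
  qed simp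
  also have "\<dots> = real n / (real p - 1)"
    using p by (simp add: q_def field_simps)
  finally show ?thesis .
qed

lemma ln_fact_eq_sum_multiplicity:
  "ln (fact n :: real) = (\<Sum>p | prime p \<and> p \<le> n. real (multiplicity p (fact n :: nat)) * ln (real p))"
proof -
  have "real (fact n :: nat) = real (\<Prod>p \<in> prime_factors (fact n :: nat). p ^ multiplicity p (fact n :: nat))"
    using prime_factorization_nat[of "fact n"] by simp
  also have "prime_factors (fact n :: nat) = {p. prime p \<and> p \<le> n}"
    by (auto simp: prime_factors_fact prime_ge_2_nat)
  finally have "ln (fact n :: real) = ln (\<Prod>p | prime p \<and> p \<le> n. real p ^ multiplicity p (fact n :: nat))"
    by simp
  also have "\<dots> = (\<Sum>p | prime p \<and> p \<le> n. ln (real p ^ multiplicity p (fact n :: nat)))"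
    by (rule ln_prod) (auto simp: prime_gt_0_nat)
  finally show ?thesis
    by (simp add: ln_realpow prime_gt_0_nat)
qed

lemma ln_fact_bounds:
  assumes "n \<ge> 1"
  shows "real n * ln (real n) - real n + 1 \<le> ln (fact n :: real)"
    and "ln (fact n :: real) \<le> real n * ln (real n) - real n + 1 + ln (real n)"
  using assms
proof (induction n rule: nat_induct_at_least)
  case base
  { case 1 show ?case by simp }
  { case 2 show ?case by simp }
next
  case (Suc n)
  have "ln (fact (Suc n) :: real) = ln (real n + 1) + ln (fact n)"
    by (simp add: fact_Suc ln_mult add.commute)
  moreover have "real n * ln (real n + 1) - real n * ln (real n) \<le> 1"
    "1 \<le> real n * ln (real n + 1) + ln (real n + 1) - real n * ln (real n) - ln (real n)"
    using ln_add_1_minus_ln_bounds[of "real n"] Suc.hyps by (simp_all add: field_simps)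
  moreover have "real (Suc n) * ln (real (Suc n)) = real n * ln (real n + 1) + ln (real n + 1)"
    by (simp add: algebra_simps)
  ultimately show "real (Suc n) * ln (real (Suc n)) - real (Suc n) + 1 \<le> ln (fact (Suc n) :: real)"
    and "ln (fact (Suc n) :: real) \<le> real (Suc n) * ln (real (Suc n)) - real (Suc n) + 1 + ln (real (Suc n))"
    using Suc.IH by (simp_all add: add.commute)
qed

section \<open>Chebyshev's bound $\vartheta(n) \le n \ln 4$\<close>

lemma finite_primes_le [simp]: "finite {p::nat. prime p \<and> p \<le> n}"
  by (rule finite_subset[of _ "{..n}"]) auto

definition primorial :: "nat \<Rightarrow> nat" where
  "primorial n = (\<Prod>p | prime p \<and> p \<le> n. p)"

lemma prod_primes_dvd:
  fixes c :: nat
  assumes "c > 0" "finite S" "\<And>p. p \<in> S \<Longrightarrow> prime p \<and> p dvd c"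
  shows "(\<Prod>p\<in>S. p) dvd c"
proof -
  have "(\<Prod>p\<in>S. p) dvd (\<Prod>p\<in>S. p ^ multiplicity p c)"
  proof (rule prod_dvd_prod)
    fix p assume "p \<in> S"
    then have "multiplicity p c \<ge> 1"
      using assms prime_gt_1_nat[of p] by (intro multiplicity_geI) auto
    then show "p dvd p ^ multiplicity p c" by (simp add: dvd_power)
  qed
  also have "\<dots> dvd (\<Prod>p \<in> prime_factors c. p ^ multiplicity p c)"
    using assms by (intro prod_dvd_prod_subset) (auto simp: in_prime_factors_iff)
  also have "\<dots> = c" using prime_factorization_nat[OF assms(1)] by simp
  finally show ?thesis .
qed

text \<open>The primes in $(m+1, 2m+1]$ divide $\binom{2m+1}{m}$.\<close>
lemma primorial_odd_le:
  "primorial (2 * m + 1) \<le> primorial (m + 1) * ((2 * m + 1) choose m)"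
proof -
  define Q where "Q = {p::nat. prime p \<and> m + 1 < p \<and> p \<le> 2 * m + 1}"
  have "(\<Prod>p\<in>Q. p) dvd (2 * m + 1) choose m"
  proof (rule prod_primes_dvd)
    show "finite Q" unfolding Q_def by (rule finite_subset[of _ "{..2*m+1}"]) auto
    fix p assume p: "p \<in> Q"
    then have pp: "prime p" unfolding Q_def by simp
    have "fact m * fact (m + 1) * ((2 * m + 1) choose m) = (fact (2 * m + 1) :: nat)"
      using binomial_fact_lemma[of m "2 * m + 1"] by (simp add: Suc_diff_le)
    moreover have "p dvd (fact (2 * m + 1) :: nat)" "\<not> p dvd (fact m :: nat)" "\<not> p dvd (fact (m + 1) :: nat)"
      using p by (simp_all add: Q_def prime_dvd_fact_iff[OF pp] del: fact_Suc)
    ultimately show "prime p \<and> p dvd (2 * m + 1) choose m"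
      using pp by (metis prime_dvd_mult_iff)
  qed simp
  then have "(\<Prod>p\<in>Q. p) \<le> (2 * m + 1) choose m"
    by (rule dvd_imp_le) simp
  moreover have "primorial (2 * m + 1) = primorial (m + 1) * (\<Prod>p\<in>Q. p)"
  proof -
    have "{p. prime p \<and> p \<le> 2 * m + 1} = {p. prime p \<and> p \<le> m + 1} \<union> Q"
      "{p. prime p \<and> p \<le> m + 1} \<inter> Q = {}"
      unfolding Q_def by auto
    then show ?thesis
      unfolding primorial_def Q_def by (simp add: prod.union_disjoint)
  qed
  ultimately show ?thesis by simp
qed

lemma primorial_le_four_power: "primorial n \<le> 4 ^ n"
proof (induction n rule: less_induct)
  case (less n)
  consider "n \<le> 2" | "n > 2" "even n" | m where "n = 2 * m + 1" "m \<ge> 1"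
  proof (cases "n \<le> 2 \<or> even n")
    case False
    then obtain m where "n = 2 * m + 1" by (auto elim: oddE)
    with False that(3)[of m] show thesis by simp
  qed (use that(1,2) not_le in blast)
  then show ?case
  proof cases
    case 1
    then consider "n < 2" | "n = 2" by linarith
    then show ?thesis
    proof cases
      case 1
      then have primes: "{p::nat. prime p \<and> p \<le> n} = {}" by (auto dest: prime_ge_2_nat)
      show ?thesis unfolding primorial_def primes by simp
    next
      case 2
      then have primes: "{p::nat. prime p \<and> p \<le> n} = {2}" by (auto dest: prime_ge_2_nat)
      show ?thesis unfolding primorial_def primes by (simp add: 2)
    qed
  next
    case 2
    then have "\<not> prime n" using prime_odd_nat by auto
    then have "{p. prime p \<and> p \<le> n} = {p. prime p \<and> p \<le> n - 1}"
      using 2 by (auto simp: le_diff_conv2 dest: le_neq_implies_less) 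
    then have "primorial n = primorial (n - 1)" unfolding primorial_def by simp
    also have "\<dots> \<le> 4 ^ (n - 1)" using less.IH[of "n - 1"] 2 by simp
    also have "\<dots> \<le> 4 ^ n" by (intro power_increasing) auto
    finally show ?thesis .
  next
    case 3
    have "primorial n \<le> primorial (m + 1) * ((2 * m + 1) choose m)"
      using primorial_odd_le 3 by simp
    also have "\<dots> \<le> 4 ^ (m + 1) * 4 ^ m"
      using less.IH[of "m + 1"] 3 binomial_r_part_sum[of m] member_le_sum[of m "{..m}" "\<lambda>k. (2 * m + 1) choose k"]
      by (intro mult_mono) (auto simp: power_mult)
    also have "\<dots> = 4 ^ n" by (simp add: 3 flip: power_add)
    finally show ?thesis .
  qed
qed

lemma sum_ln_primes_le: "(\<Sum>p | prime p \<and> p \<le> n. ln (real p)) \<le> real n * ln 4"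
proof -
  have "(\<Sum>p | prime p \<and> p \<le> n. ln (real p)) = ln (real (primorial n))"
    unfolding primorial_def by (subst ln_prod[symmetric]) (auto simp: prime_gt_0_nat)
  also have "\<dots> \<le> ln (4 ^ n)"
  proof -
    have "real (primorial n) \<le> 4 ^ n"
      using primorial_le_four_power[of n] by (metis of_nat_le_iff of_nat_numeral of_nat_power)
    moreover have "real (primorial n) > 0"
      unfolding primorial_def by (auto simp: prime_gt_0_nat intro!: prod_pos)
    ultimately show ?thesis by simp
  qed
  also have "\<dots> = real n * ln 4" by (simp add: ln_realpow)
  finally show ?thesis .
qed

section \<open>Mertens' first theorem\<close>

definition mertens_M :: "nat \<Rightarrow> real" where
  "mertens_M n = (\<Sum>p | prime p \<and> p \<le> n. ln (real p) / real p)"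

lemma mertens_M_le:
  assumes "n \<ge> 1"
  shows "mertens_M n \<le> ln (real n) + ln 4 - 1 + (1 + ln (real n)) / real n"
proof -
  let ?P = "{p. prime p \<and> p \<le> n}"
  have "real n * mertens_M n - (\<Sum>p\<in>?P. ln (real p)) = (\<Sum>p\<in>?P. (real n / real p - 1) * ln (real p))"
    unfolding mertens_M_def by (simp add: sum_distrib_left sum_subtractf[symmetric] algebra_simps)
  also have "\<dots> \<le> (\<Sum>p\<in>?P. real (multiplicity p (fact n :: nat)) * ln (real p))"
    by (intro sum_mono mult_right_mono multiplicity_fact_ge) (auto simp: prime_gt_0_nat Suc_le_eq)
  also have "\<dots> = ln (fact n)" by (simp add: ln_fact_eq_sum_multiplicity)
  also have "\<dots> \<le> real n * ln (real n) - real n + 1 + ln (real n)" by (rule ln_fact_bounds(2)[OF assms])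
  finally have "real n * mertens_M n \<le> real n * (ln (real n) + ln 4 - 1) + (1 + ln (real n))"
    using sum_ln_primes_le[of n] by (simp add: algebra_simps)
  then show ?thesis
    using assms by (simp add: field_simps)
qed

lemma mertens_M_ge:
  assumes "n \<ge> 1"
  shows "ln (real n) - 1 - (\<Sum>p | prime p \<and> p \<le> n. ln (real p) / (real p * (real p - 1))) \<le> mertens_M n"
proof -
  let ?P = "{p. prime p \<and> p \<le> n}"
  have "real n * ln (real n) - real n + 1 \<le> ln (fact n)" by (rule ln_fact_bounds(1)[OF assms])
  also have "\<dots> = (\<Sum>p\<in>?P. real (multiplicity p (fact n :: nat)) * ln (real p))"
    by (simp add: ln_fact_eq_sum_multiplicity)
  also have "\<dots> \<le> (\<Sum>p\<in>?P. real n / (real p - 1) * ln (real p))"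
    by (intro sum_mono mult_right_mono multiplicity_fact_le) (auto simp: prime_gt_0_nat Suc_le_eq)
  also have "\<dots> = real n * (\<Sum>p\<in>?P. ln (real p) / real p + ln (real p) / (real p * (real p - 1)))"
    unfolding sum_distrib_left
    by (intro sum.cong refl) (auto simp: field_simps dest!: prime_ge_2_nat)
  finally have "real n * (ln (real n) - 1) \<le> real n * (mertens_M n + (\<Sum>p\<in>?P. ln (real p) / (real p * (real p - 1))))"
    unfolding mertens_M_def sum.distrib by (simp add: algebra_simps)
  then show ?thesis
    using assms by simp
qed

lemma sum_ln_div_tail_le:
  assumes "N \<ge> 1"
  shows "(\<Sum>m=N+1..n. ln (real m) / (real m * (real m - 1))) \<le> (ln (real N) + (real N + 1) / real N) / real N"
proof -
  define c where "c = (real N + 1) / real N"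
  define f where "f m = (ln (real m) + c) / real m" for m
  have telescope: "(\<Sum>m=N+1..n. ln (real m) / (real m * (real m - 1))) \<le> f N - f n" if "n \<ge> N" for n
    using that
  proof (induction n rule: nat_induct_at_least)
    case base
    then show ?case by simp
  next
    case (Suc n)
    have n: "real n \<ge> real N" "real N \<ge> 1" using Suc.hyps assms by auto
    have "(real n + 1) * (ln (real n + 1) - ln (real n)) \<le> (real n + 1) * (1 / real n)"
      using ln_add_1_minus_ln_bounds(2)[of "real n"] n by (intro mult_left_mono) auto
    also have "\<dots> \<le> c"
      using n by (simp add: c_def field_simps)
    finally have "0 \<le> (c - (real n + 1) * (ln (real n + 1) - ln (real n))) / (real n * (real n + 1))"
      using n by simp
    also have "\<dots> = f n - f (Suc n) - ln (real n + 1) / ((real n + 1) * real n)"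
      using n unfolding f_def by (simp add: divide_simps) (simp add: algebra_simps)
    finally show ?case
      using Suc.IH Suc.hyps by (simp add: add.commute)
  qed
  have f_nonneg: "f m \<ge> 0" for m
    unfolding f_def c_def by (cases "m = 0") (auto intro!: divide_nonneg_pos add_nonneg_nonneg)
  have "(\<Sum>m=N+1..n. ln (real m) / (real m * (real m - 1))) \<le> f N"
  proof (cases "n \<ge> N")
    case True
    then show ?thesis using telescope[OF True] f_nonneg[of n] by linarith
  next
    case False
    then show ?thesis using f_nonneg[of N] by simp
  qed
  then show ?thesis
    by (simp add: f_def c_def)
qed

lemma primes_le_11: "{p::nat. prime p \<and> p \<le> 11} = {2, 3, 5, 7, 11}"
proof -
  have small: "p \<le> 11 \<Longrightarrow> p \<in> {0, 1, 2, 3, 4, 5, 6, 7, 8, 9, 10, 11}" for p :: nat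
    unfolding insert_iff empty_iff by presburger
  show ?thesis by (auto dest!: small)
qed

lemma sum_ln_prime_div_le:
  "(\<Sum>p | prime p \<and> p \<le> n. ln (real p) / (real p * (real p - 1))) \<le> 51 / 50"
proof -
  define g :: "nat \<Rightarrow> real" where "g m = ln (real m) / (real m * (real m - 1))" for m
  have g: "g m \<ge> 0" for m by (cases "m = 0") (auto simp: g_def)
  have "{p. prime p \<and> p \<le> n} \<subseteq> {2, 3, 5, 7, 11} \<union> {12..n}"
  proof
    fix p assume "p \<in> {p. prime p \<and> p \<le> n}"
    then show "p \<in> {2, 3, 5, 7, 11} \<union> {12..n}"
      using primes_le_11 by (cases "p \<le> 11") auto
  qed
  then have "(\<Sum>p | prime p \<and> p \<le> n. g p) \<le> (\<Sum>p\<in>{2, 3, 5, 7, 11} \<union> {12..n}. g p)"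
    by (intro sum_mono2) (auto simp: g)
  also have "\<dots> \<le> (\<Sum>p\<in>{2, 3, 5, 7, 11}. g p) + (\<Sum>p=11+1..n. g p)"
    by (simp add: sum_Un sum_nonneg g)
  also have "(\<Sum>p=11+1..n. g p) \<le> (ln 11 + 12 / 11) / 11"
    using sum_ln_div_tail_le[of 11 n] by (simp add: g_def)
  finally have "(\<Sum>p | prime p \<and> p \<le> n. g p)
      \<le> ln 2 / 2 + ln 3 / 6 + ln 5 / 20 + ln 7 / 42 + ln 11 / 110 + (ln 11 + 12 / 11) / 11"
    by (simp add: g_def)
  moreover have "ln (4::real) = 2 * ln 2" "ln (8::real) = 3 * ln 2"
    using ln_realpow[of 2 2] ln_realpow[of 2 3] by simp_all
  then have "ln (3::real) \<le> 2 * ln 2 - 1 / 4" "ln (5::real) \<le> 2 * ln 2 + 1 / 4"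
    "ln (7::real) \<le> 3 * ln 2 - 1 / 8" "ln (11::real) \<le> 3 * ln 2 + 3 / 8"
    using ln_le_ln_plus_div_minus_1[of 3 4] ln_le_ln_plus_div_minus_1[of 5 4]
      ln_le_ln_plus_div_minus_1[of 7 8] ln_le_ln_plus_div_minus_1[of 11 8] by simp_all
  ultimately have "(\<Sum>p | prime p \<and> p \<le> n. g p) \<le> 51 / 50"
    using ln2_le_25_over_36 by (simp add: field_simps)
  then show ?thesis
    by (simp add: g_def)
qed

section \<open>Mertens' second theorem with an explicit error term\<close>

definition prime_recip_sum :: "nat \<Rightarrow> real" where
  "prime_recip_sum n = (\<Sum>p | prime p \<and> p \<le> n. 1 / real p)"

definition mertens_remainder :: "nat \<Rightarrow> real" where
  "mertens_remainder n = mertens_M n - ln (real n)"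

lemma mertens_remainder_ge: "n \<ge> 1 \<Longrightarrow> - 101 / 50 \<le> mertens_remainder n"
  using mertens_M_ge[of n] sum_ln_prime_div_le[of n] unfolding mertens_remainder_def by linarith

lemma mertens_remainder_le:
  "n \<ge> 1 \<Longrightarrow> mertens_remainder n \<le> ln 4 - 1 + (1 + ln (real n)) / real n"
  using mertens_M_le[of n] unfolding mertens_remainder_def by linarith

lemma abs_mertens_remainder_le: "n \<ge> 1 \<Longrightarrow> \<bar>mertens_remainder n\<bar> \<le> 3"
proof -
  assume n: "n \<ge> 1"
  have "ln (real n) \<le> real n - 1" using n by (intro ln_le_minus_one) simp
  then have "(1 + ln (real n)) / real n \<le> 1" using n by (simp add: field_simps)
  then show ?thesis
    using mertens_remainder_ge[OF n] mertens_remainder_le[OF n] ln_4_bounds by (simp add: abs_le_iff)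
qed

text \<open>Partial summation: \<open>mertens_F n = prime_recip_sum n - mertens_M n / ln n + 1 - ln (ln n)\<close>,
  and at a prime $q$ both \<open>prime_recip_sum\<close> and \<open>mertens_M / ln\<close> jump by $1/q$. Hence the
  increments of \<open>mertens_F\<close> are smooth and, the remainder being bounded, summable.\<close>
definition mertens_F :: "nat \<Rightarrow> real" where
  "mertens_F n = prime_recip_sum n - ln (ln (real n)) - mertens_remainder n / ln (real n)"

definition mertens_F_increment :: "nat \<Rightarrow> real" where
  "mertens_F_increment m =
     (ln (real m + 1) - ln (real m)) / ln (real m + 1) - (ln (ln (real m + 1)) - ln (ln (real m)))
     + mertens_remainder m * (1 / ln (real m) - 1 / ln (real m + 1))"

lemma mertens_F_Suc:
  assumes "m \<ge> 2"
  shows "mertens_F (Suc m) = mertens_F m + mertens_F_increment m"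
proof -
  have l0: "ln (real m) > 0" and l1: "ln (real m + 1) > 0" using assms by simp_all
  define P where "P = (if prime (Suc m) then 1::real else 0)"
  have primes: "{p. prime p \<and> p \<le> Suc m}
      = (if prime (Suc m) then insert (Suc m) {p. prime p \<and> p \<le> m} else {p. prime p \<and> p \<le> m})"
    by (auto simp: le_Suc_eq)
  have "prime_recip_sum (Suc m) = prime_recip_sum m + P / (real m + 1)"
    "mertens_M (Suc m) = mertens_M m + P * ln (real m + 1) / (real m + 1)"
    unfolding prime_recip_sum_def mertens_M_def P_def primes by (auto simp: add.commute)
  then have "mertens_F (Suc m) = prime_recip_sum m + P / (real m + 1) - ln (ln (real m + 1))
      - (mertens_M m + P * ln (real m + 1) / (real m + 1) - ln (real m + 1)) / ln (real m + 1)"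
    unfolding mertens_F_def mertens_remainder_def by (simp add: add.commute)
  also have "\<dots> = prime_recip_sum m - ln (ln (real m + 1)) - mertens_M m / ln (real m + 1) + 1"
  proof -
    have "S + P / M - Q - (R + P * L / M - L) / L = S - Q - R / L + 1"
      if "L \<noteq> 0" "M \<noteq> 0" for S M Q R L :: real
      using that by (simp add: field_simps)
    then show ?thesis using l1 assms by simp
  qed
  also have "\<dots> = mertens_F m + mertens_F_increment m"
    using l0 l1 unfolding mertens_F_def mertens_F_increment_def mertens_remainder_def
    by (simp add: field_simps)
  finally show ?thesis .
qed

lemma lnln_increment_bounds:
  fixes x :: real
  assumes "x > 1"
  shows "- 1 / (x ^ 2 * ln x ^ 2) \<le> (ln (x + 1) - ln x) / ln (x + 1) - (ln (ln (x + 1)) - ln (ln x))"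
    and "(ln (x + 1) - ln x) / ln (x + 1) - (ln (ln (x + 1)) - ln (ln x)) \<le> 0"
proof -
  define L where "L = ln x"
  define t where "t = ln (x + 1) - ln x"
  have L: "L > 0" and t: "t > 0" "t \<le> 1 / x"
    using assms ln_add_1_minus_ln_bounds(2)[of x] by (simp_all add: L_def t_def)
  have e: "ln (x + 1) = L + t" unfolding L_def t_def by simp
  have up: "ln (L + t) - ln L \<le> t / L"
    using ln_le_ln_plus_div_minus_1[of "L + t" L] L t by (simp add: field_simps)
  have lo: "t / (L + t) \<le> ln (L + t) - ln L"
    using ln_le_ln_plus_div_minus_1[of L "L + t"] L t by (simp add: field_simps)
  show "(ln (x + 1) - ln x) / ln (x + 1) - (ln (ln (x + 1)) - ln (ln x)) \<le> 0"
    using lo unfolding e by (simp add: L_def t_def)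
  have "t * t / (L * (L + t)) \<le> t * t / (L * L)"
    using L t by (intro divide_left_mono mult_left_mono) auto
  then have "- (t * t) / (L * L) \<le> - (t * t) / (L * (L + t))"
    by simp
  also have "\<dots> = t / (L + t) - t / L"
    using L t by (simp add: field_simps)
  finally have "- (t * t) / (L * L) \<le> (ln (x + 1) - ln x) / ln (x + 1) - (ln (ln (x + 1)) - ln (ln x))"
    using up unfolding e by (simp add: L_def t_def)
  moreover have "t * t / (L * L) \<le> (1 / x) * (1 / x) / (L * L)"
    using L t assms by (intro divide_right_mono mult_mono) auto
  ultimately show "- 1 / (x ^ 2 * ln x ^ 2) \<le> (ln (x + 1) - ln x) / ln (x + 1) - (ln (ln (x + 1)) - ln (ln x))"
    by (simp add: L_def power2_eq_square)
qed

lemma inverse_ln_decrement_nonneg: "m \<ge> 2 \<Longrightarrow> 0 \<le> 1 / ln (real m) - 1 / ln (real m + 1)"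
  by (simp add: frac_le)

lemma abs_mertens_F_increment_le:
  assumes "m \<ge> 2"
  shows "\<bar>mertens_F_increment m\<bar> \<le> 3 * inverse (real m ^ 2) + 3 * (1 / ln (real m) - 1 / ln (real (Suc m)))"
proof -
  have "ln 2 \<le> ln (real m)" using assms by simp
  then have "(2 / 3) ^ 2 \<le> ln (real m) ^ 2"
    using ln2_ge_two_thirds by (intro power_mono) auto
  then have "1 / (real m ^ 2 * ln (real m) ^ 2) \<le> 3 * inverse (real m ^ 2)"
    using assms by (simp add: field_simps power2_eq_square)
  then have "\<bar>(ln (real m + 1) - ln (real m)) / ln (real m + 1) - (ln (ln (real m + 1)) - ln (ln (real m)))\<bar>
      \<le> 3 * inverse (real m ^ 2)"
    using lnln_increment_bounds[of "real m"] assms by simp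
  moreover have "\<bar>mertens_remainder m * (1 / ln (real m) - 1 / ln (real m + 1))\<bar>
      \<le> 3 * (1 / ln (real m) - 1 / ln (real m + 1))"
  proof -
    have "\<bar>mertens_remainder m\<bar> * (1 / ln (real m) - 1 / ln (real m + 1))
        \<le> 3 * (1 / ln (real m) - 1 / ln (real m + 1))"
      using abs_mertens_remainder_le[of m] inverse_ln_decrement_nonneg[OF assms] assms
      by (intro mult_right_mono) auto
    then show ?thesis
      using inverse_ln_decrement_nonneg[OF assms] by (simp add: abs_mult)
  qed
  ultimately show ?thesis
    unfolding mertens_F_increment_def by (simp add: add.commute)
qed

lemma summable_mertens_F_increment: "summable mertens_F_increment"
proof (rule summable_comparison_test')
  show "summable (\<lambda>m. 3 * inverse (real m ^ 2) + 3 * (1 / ln (real m) - 1 / ln (real (Suc m))))"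
  proof (intro summable_add summable_mult)
    show "summable (\<lambda>m. inverse (real m ^ 2))" by (rule inverse_power_summable) simp
    have "(\<lambda>m. 1 / ln (real m)) \<longlonglongrightarrow> 0" by real_asymp
    then show "summable (\<lambda>m. 1 / ln (real m) - 1 / ln (real (Suc m)))"
      by (rule telescope_summable')
  qed
  show "norm (mertens_F_increment m) \<le> 3 * inverse (real m ^ 2) + 3 * (1 / ln (real m) - 1 / ln (real (Suc m)))"
    if "m \<ge> 2" for m
    using abs_mertens_F_increment_le[OF that] by simp
qed

lemma mertens_F_eq_sum: "n \<ge> 2 \<Longrightarrow> mertens_F n = mertens_F 2 + (\<Sum>m\<in>{2..<n}. mertens_F_increment m)"
proof (induction n rule: nat_induct_at_least)
  case base
  then show ?case by simp
next
  case (Suc n)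
  then show ?case using mertens_F_Suc[OF Suc.hyps] by simp
qed

lemma mertens_F_convergent: "convergent mertens_F"
proof -
  let ?g = mertens_F_increment
  have "(\<lambda>n. mertens_F 2 - ?g 0 - ?g 1 + (\<Sum>m<n. ?g m)) \<longlonglongrightarrow> mertens_F 2 - ?g 0 - ?g 1 + suminf ?g"
    by (intro tendsto_add tendsto_const summable_LIMSEQ summable_mertens_F_increment)
  moreover have "eventually (\<lambda>n. mertens_F 2 - ?g 0 - ?g 1 + (\<Sum>m<n. ?g m) = mertens_F n) sequentially"
  proof (rule eventually_sequentiallyI)
    fix n :: nat assume n: "n \<ge> 2"
    have "{..<n} = {0, 1} \<union> {2..<n}" using n by auto
    then have "(\<Sum>m<n. ?g m) = ?g 0 + ?g 1 + (\<Sum>m\<in>{2..<n}. ?g m)"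
      by (simp add: sum.union_disjoint)
    then show "mertens_F 2 - ?g 0 - ?g 1 + (\<Sum>m<n. ?g m) = mertens_F n"
      using mertens_F_eq_sum[OF n] by simp
  qed
  ultimately have "mertens_F \<longlonglongrightarrow> mertens_F 2 - ?g 0 - ?g 1 + suminf ?g"
    by (rule Lim_transform_eventually)
  then show ?thesis by (rule convergentI)
qed

lemma mertens_F_increment_ge:
  assumes "x \<ge> 2" "y \<ge> x"
  shows "- 101 / 50 * (1 / ln (real y) - 1 / ln (real y + 1))
           - 1 / ln (real x) ^ 2 * (1 / (real y - 1) - 1 / real y) \<le> mertens_F_increment y"
proof -
  have y: "real y \<ge> 2" and lx: "ln (real x) > 0" and lxy: "ln (real x) \<le> ln (real y)"
    using assms by simp_all
  have "- 101 / 50 * (1 / ln (real y) - 1 / ln (real y + 1))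
      \<le> mertens_remainder y * (1 / ln (real y) - 1 / ln (real y + 1))"
    using mertens_remainder_ge[of y] inverse_ln_decrement_nonneg[of y] assms
    by (intro mult_right_mono) auto
  moreover have "1 / (real y ^ 2 * ln (real y) ^ 2) \<le> (1 / ln (real x) ^ 2) * (1 / (real y - 1) - 1 / real y)"
  proof -
    have "real y * (real y - 1) * ln (real x) ^ 2 \<le> real y ^ 2 * ln (real y) ^ 2"
      using y lx lxy by (intro mult_mono power_mono) (auto simp: power2_eq_square)
    then have "1 / (real y ^ 2 * ln (real y) ^ 2) \<le> 1 / (real y * (real y - 1) * ln (real x) ^ 2)"
      using y lx by (intro divide_left_mono) auto
    also have "\<dots> = (1 / ln (real x) ^ 2) * (1 / (real y - 1) - 1 / real y)"
      using y by (simp add: field_simps)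
    finally show ?thesis .
  qed
  ultimately show ?thesis
    using lnln_increment_bounds(1)[of "real y"] y unfolding mertens_F_increment_def by linarith
qed

lemma mertens_F_tail_ge:
  assumes "x \<ge> 2" "y \<ge> x"
  shows "mertens_F x - 101 / 50 * (1 / ln (real x) - 1 / ln (real y))
           - (1 / ln (real x) ^ 2) * (1 / (real x - 1) - 1 / (real y - 1)) \<le> mertens_F y"
  using assms(2)
proof (induction y rule: dec_induct)
  case base
  then show ?case by simp
next
  case (step y)
  have "mertens_F (Suc y) = mertens_F y + mertens_F_increment y"
    using mertens_F_Suc[of y] step assms by simp
  moreover have Suc_y: "ln (real (Suc y)) = ln (real y + 1)" "real (Suc y) - 1 = real y"
    by (simp_all add: add.commute)
  ultimately show ?case
    unfolding Suc_y using step.IH mertens_F_increment_ge[OF assms(1) step.hyps(1)]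
    by (simp add: right_diff_distrib)
qed

lemma lim_mertens_F_ge:
  assumes "x \<ge> 2"
  shows "mertens_F x - 101 / 50 / ln (real x) - 1 / ((real x - 1) * ln (real x) ^ 2) \<le> lim mertens_F"
proof (rule LIMSEQ_le_const[OF convergent_LIMSEQ_iff[THEN iffD1, OF mertens_F_convergent]], intro exI allI impI)
  fix y assume y: "y \<ge> x"
  have "1 / ln (real y) \<ge> 0" "1 / (real y - 1) \<ge> 0" using y assms by simp_all
  then have "101 / 50 * (1 / ln (real x) - 1 / ln (real y)) \<le> 101 / 50 / ln (real x)"
    "(1 / ln (real x) ^ 2) * (1 / (real x - 1) - 1 / (real y - 1)) \<le> (1 / ln (real x) ^ 2) * (1 / (real x - 1))"
    by (simp, intro mult_left_mono) auto
  moreover have "(1 / ln (real x) ^ 2) * (1 / (real x - 1)) = 1 / ((real x - 1) * ln (real x) ^ 2)"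
    by simp
  ultimately show "mertens_F x - 101 / 50 / ln (real x) - 1 / ((real x - 1) * ln (real x) ^ 2) \<le> mertens_F y"
    using mertens_F_tail_ge[OF assms y] by linarith
qed

lemma prime_recip_sum_minus_lnln_tendsto:
  "(\<lambda>n. prime_recip_sum n - ln (ln (real n))) \<longlonglongrightarrow> lim mertens_F"
proof -
  have "(\<lambda>n. mertens_remainder n / ln (real n)) \<longlonglongrightarrow> 0"
  proof (rule Lim_null_comparison)
    show "eventually (\<lambda>n. norm (mertens_remainder n / ln (real n)) \<le> 3 / ln (real n)) sequentially"
    proof (rule eventually_sequentiallyI[of 2])
      fix n :: nat assume n: "n \<ge> 2"
      then show "norm (mertens_remainder n / ln (real n)) \<le> 3 / ln (real n)"
        using abs_mertens_remainder_le[of n] by (simp add: abs_div divide_right_mono)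
    qed
    show "(\<lambda>n. 3 / ln (real n)) \<longlonglongrightarrow> 0" by real_asymp
  qed
  then have "(\<lambda>n. mertens_F n + mertens_remainder n / ln (real n)) \<longlonglongrightarrow> lim mertens_F + 0"
    using mertens_F_convergent by (intro tendsto_add) (simp_all add: convergent_LIMSEQ_iff)
  then show ?thesis by (simp add: mertens_F_def)
qed

lemma lnln_floor_diff_le:
  fixes x :: real
  assumes "x \<ge> 3"
  shows "\<bar>ln (ln (real (nat \<lfloor>x\<rfloor>))) - ln (ln x)\<bar> \<le> 2 / (x - 1)"
proof -
  define n where "n = real (nat \<lfloor>x\<rfloor>)"
  have n: "n \<le> x" "x < n + 1" "n \<ge> 2" unfolding n_def using assms by linarith+
  have ln_n: "ln n \<ge> 2 / 3" using ln2_ge_two_thirds n ln_le_cancel_iff[of 2 n] by linarith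
  have "ln (ln x) \<le> ln (ln n) + ln x / ln n - 1"
    using ln_le_ln_plus_div_minus_1[of "ln x" "ln n"] ln_n n by simp
  moreover have "ln x \<le> ln n + x / n - 1" using ln_le_ln_plus_div_minus_1[of x n] n by simp
  ultimately have "ln (ln x) - ln (ln n) \<le> (x / n - 1) / ln n" using ln_n by (simp add: field_simps)
  also have "\<dots> \<le> (1 / n) / (2 / 3)"
  proof (rule frac_le)
    have "x / n \<le> (n + 1) / n" using n by (intro divide_right_mono) auto
    moreover have "(n + 1) / n = 1 + 1 / n" using n by (simp add: field_simps)
    ultimately show "x / n - 1 \<le> 1 / n" by linarith
  qed (use n ln_n in auto)
  also have "\<dots> \<le> 2 / (x - 1)" using n by (simp add: field_simps)
  finally show ?thesis
    using n ln_n unfolding n_def by simp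
qed

lemma tendsto_prime_recip_sum_minus_lnln:
  "((\<lambda>x::real. (\<Sum>p | prime p \<and> real p \<le> x. 1 / real p) - ln (ln x)) \<longlongrightarrow> lim mertens_F) at_top"
proof -
  have "filterlim (\<lambda>x::real. nat \<lfloor>x\<rfloor>) sequentially at_top"
    by (rule filterlim_compose[OF filterlim_nat_sequentially filterlim_floor_sequentially])
  from filterlim_compose[OF prime_recip_sum_minus_lnln_tendsto this]
  have "((\<lambda>x::real. prime_recip_sum (nat \<lfloor>x\<rfloor>) - ln (ln (real (nat \<lfloor>x\<rfloor>)))) \<longlongrightarrow> lim mertens_F) at_top"
    by (simp add: o_def)
  moreover have "((\<lambda>x::real. ln (ln (real (nat \<lfloor>x\<rfloor>))) - ln (ln x)) \<longlongrightarrow> 0) at_top"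
  proof (rule Lim_null_comparison)
    show "eventually (\<lambda>x. norm (ln (ln (real (nat \<lfloor>x\<rfloor>))) - ln (ln x)) \<le> 2 / (x - 1)) at_top"
      using eventually_ge_at_top[of "3::real"] by eventually_elim (metis lnln_floor_diff_le real_norm_def)
    show "((\<lambda>x::real. 2 / (x - 1)) \<longlongrightarrow> 0) at_top" by real_asymp
  qed
  ultimately have "((\<lambda>x::real. prime_recip_sum (nat \<lfloor>x\<rfloor>) - ln (ln x)) \<longlongrightarrow> lim mertens_F + 0) at_top"
    by (auto dest: tendsto_add)
  then have "((\<lambda>x::real. prime_recip_sum (nat \<lfloor>x\<rfloor>) - ln (ln x)) \<longlongrightarrow> lim mertens_F) at_top"
    by simp
  moreover have "eventually (\<lambda>x::real. prime_recip_sum (nat \<lfloor>x\<rfloor>) - ln (ln x)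
      = (\<Sum>p | prime p \<and> real p \<le> x. 1 / real p) - ln (ln x)) at_top"
  proof (rule eventually_mono[OF eventually_ge_at_top[of 0]])
    fix x :: real assume "x \<ge> 0"
    then have "{p. prime p \<and> real p \<le> x} = {p. prime p \<and> p \<le> nat \<lfloor>x\<rfloor>}"
      by (auto simp: le_nat_iff le_floor_iff)
    then show "prime_recip_sum (nat \<lfloor>x\<rfloor>) - ln (ln x) = (\<Sum>p | prime p \<and> real p \<le> x. 1 / real p) - ln (ln x)"
      by (simp add: prime_recip_sum_def)
  qed
  ultimately show ?thesis
    by (rule Lim_transform_eventually)
qed

lemma mertens_c1_eq_lim: "mertens_c1 = lim mertens_F"
  unfolding mertens_c1_def by (rule tendsto_Lim) (simp_all add: tendsto_prime_recip_sum_minus_lnln)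

definition mertens_delta :: "real \<Rightarrow> real" where
  "mertens_delta x = ln 4 + 51 / 50 + (1 + ln x) / x + 1 / ((x - 1) * ln x)"

lemma prime_recip_sum_le:
  assumes "x \<ge> 2"
  shows "prime_recip_sum x \<le> ln (ln (real x)) + mertens_c1 + mertens_delta (real x) / ln (real x)"
proof -
  have lx: "ln (real x) > 0" using assms by simp
  have "mertens_F x \<ge> prime_recip_sum x - ln (ln (real x)) - (ln 4 - 1 + (1 + ln (real x)) / real x) / ln (real x)"
    unfolding mertens_F_def using mertens_remainder_le[of x] assms lx by (simp add: divide_right_mono)
  moreover have "mertens_delta (real x)
      = (ln 4 - 1 + (1 + ln (real x)) / real x) + 101 / 50 + 1 / ((real x - 1) * ln (real x))"
    by (simp add: mertens_delta_def)
  then have "mertens_delta (real x) / ln (real x)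
      = (ln 4 - 1 + (1 + ln (real x)) / real x) / ln (real x) + 101 / 50 / ln (real x)
        + 1 / ((real x - 1) * ln (real x) ^ 2)"
    by (simp only: add_divide_distrib) (simp add: power2_eq_square)
  ultimately show ?thesis
    using lim_mertens_F_ge[OF assms] mertens_c1_eq_lim by linarith
qed

lemma prime_pr: "prime (pr l)"
  unfolding pr_def using enumerate_in_set[OF primes_infinite] by simp

lemma pr_le_pr_iff: "l \<ge> 1 \<Longrightarrow> l' \<ge> 1 \<Longrightarrow> pr l \<le> pr l' \<longleftrightarrow> l \<le> l'"
  unfolding pr_def using primes_infinite by (simp del: One_nat_def) arith

lemma inj_on_pr: "inj_on pr {1..}"
proof (rule inj_onI)
  fix a b assume "a \<in> {1..}" "b \<in> {1..}" "pr a = pr b"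
  then show "a = b" using pr_le_pr_iff[of a b] pr_le_pr_iff[of b a] by auto
qed

lemma primes_le_pr: "n \<ge> 1 \<Longrightarrow> {p. prime p \<and> p \<le> pr n} = pr ` {1..n}"
proof (intro equalityI subsetI)
  fix p assume n: "n \<ge> 1" and "p \<in> {p. prime p \<and> p \<le> pr n}"
  then have p: "prime p" "p \<le> pr n" by auto
  then obtain i where "enumerate {p. prime p} i = p"
    using enumerate_Ex[OF primes_infinite] by blast
  then have "pr (Suc i) = p" unfolding pr_def by simp
  moreover have "Suc i \<le> n" using pr_le_pr_iff[of "Suc i" n] n p calculation by simp
  ultimately show "p \<in> pr ` {1..n}" by force
qed (auto simp: prime_pr pr_le_pr_iff)

lemma card_primes_le_pr: "n \<ge> 1 \<Longrightarrow> card {p. prime p \<and> p \<le> pr n} = n"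
proof -
  assume "n \<ge> 1"
  moreover have "inj_on pr {1..n}" by (rule inj_on_subset[OF inj_on_pr]) auto
  ultimately show ?thesis by (simp add: primes_le_pr card_image)
qed

lemma pr_le_iff_card_primes:
  assumes "n \<ge> 1"
  shows "pr n \<le> y \<longleftrightarrow> n \<le> card {p. prime p \<and> p \<le> y}"
proof
  assume "pr n \<le> y"
  then have "{p. prime p \<and> p \<le> pr n} \<subseteq> {p. prime p \<and> p \<le> y}" by auto
  from card_mono[OF finite_primes_le this] show "n \<le> card {p. prime p \<and> p \<le> y}"
    using card_primes_le_pr[OF assms] by simp
next
  assume n: "n \<le> card {p. prime p \<and> p \<le> y}"
  show "pr n \<le> y"
  proof (rule ccontr)
    assume "\<not> pr n \<le> y"
    then have "{p. prime p \<and> p \<le> y} \<subseteq> {p. prime p \<and> p \<le> pr n} - {pr n}" by auto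
    then have "card {p. prime p \<and> p \<le> y} \<le> card {p. prime p \<and> p \<le> pr n} - 1"
      using card_mono[of "{p. prime p \<and> p \<le> pr n} - {pr n}"] prime_pr[of n] by (simp add: card_Diff_singleton)
    then show False using n card_primes_le_pr[OF assms] assms by simp
  qed
qed

lemma prime_recip_sum_pr: "n \<ge> 1 \<Longrightarrow> prime_recip_sum (pr n) = (\<Sum>l=1..n. 1 / real (pr l))"
proof -
  assume n: "n \<ge> 1"
  have "inj_on pr {1..n}" by (rule inj_on_subset[OF inj_on_pr]) auto
  then show ?thesis
    unfolding prime_recip_sum_def primes_le_pr[OF n] by (simp add: sum.reindex)
qed

lemma primes_le_16: "{p::nat. prime p \<and> p \<le> 16} = {2, 3, 5, 7, 11, 13}"
proof -
  have small: "p \<le> 16 \<Longrightarrow> p \<in> {0, 1, 2, 3, 4, 5, 6, 7, 8, 9, 10, 11, 12, 13, 14, 15, 16}" for p :: nat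
    unfolding insert_iff empty_iff by presburger
  show ?thesis by (auto dest!: small)
qed

lemma pr_ge_17: "n \<ge> 7 \<Longrightarrow> pr n \<ge> 17"
  using pr_le_iff_card_primes[of n 16] by (simp add: primes_le_16)

section \<open>An upper bound for the $n$-th prime\<close>

lemma double_div_le: "(2 * m) div q \<le> 2 * (m div q) + (if q \<le> 2 * m then 1 else 0)" for m q :: nat
proof (cases "q \<le> 2 * m \<and> q > 0")
  case False
  then show ?thesis by auto
next
  case True
  have "2 * m = q * (2 * (m div q)) + 2 * (m mod q)"
    by (metis add_mult_distrib2 div_mult_mod_eq mult.commute mult.left_commute)
  then have "(2 * m) div q = 2 * (m div q) + (2 * (m mod q)) div q"
    using True by (metis div_mult_self2 add.commute less_numeral_extra(3) mult.commute)
  moreover have "(2 * (m mod q)) div q < 2"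
    using True by (simp add: div_less_iff_less_mult)
  ultimately show ?thesis using True by simp
qed

text \<open>By Legendre's formula the exponent of $p$ in $\binom{2m}{m}$ is
  $\sum_{k \ge 1} (\lfloor 2m/p^k \rfloor - 2\lfloor m/p^k \rfloor)$, whose terms are $0$ or $1$ and
  vanish once $p^k > 2m$.\<close>
lemma prime_power_multiplicity_central_binomial_le:
  assumes p: "prime p" and m: "m \<ge> 1"
  shows "p ^ multiplicity p ((2 * m) choose m) \<le> 2 * m"
proof (rule ccontr)
  define v where "v = multiplicity p ((2 * m) choose m)"
  define K where "K = {k \<in> {1..2 * m}. p ^ k \<le> 2 * m}"
  assume "\<not> p ^ multiplicity p ((2 * m) choose m) \<le> 2 * m"
  then have big: "p ^ v > 2 * m" unfolding v_def by simp
  have "fact m * fact m * ((2 * m) choose m) = (fact (2 * m) :: nat)"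
    using binomial_fact_lemma[of m "2 * m"] by simp
  then have "multiplicity p (fact (2 * m) :: nat) = 2 * multiplicity p (fact m :: nat) + v"
    unfolding v_def using p by (metis mult_2 prime_elem_multiplicity_mult_distrib prime_imp_prime_elem
      fact_nonzero binomial_eq_0_iff not_less mult_eq_0_iff le_add2 mult_2_right)
  then have "(\<Sum>k=1..2 * m. (2 * m) div p ^ k) = 2 * (\<Sum>k=1..2 * m. m div p ^ k) + v"
    using multiplicity_fact_eq_sum_div[OF p, of "2 * m" "2 * m"] multiplicity_fact_eq_sum_div[OF p, of m "2 * m"]
    by simp
  moreover have "(\<Sum>k=1..2 * m. (2 * m) div p ^ k) \<le> 2 * (\<Sum>k=1..2 * m. m div p ^ k) + card K"
  proof -
    have "(\<Sum>k=1..2 * m. (2 * m) div p ^ k)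
        \<le> (\<Sum>k=1..2 * m. 2 * (m div p ^ k) + (if p ^ k \<le> 2 * m then 1 else 0))"
      by (intro sum_mono double_div_le)
    also have "\<dots> = 2 * (\<Sum>k=1..2 * m. m div p ^ k) + card K"
      unfolding K_def by (simp add: sum.distrib sum_distrib_left sum.If_cases Int_def conj_commute)
    finally show ?thesis .
  qed
  moreover have "K \<subseteq> {1..v - 1}"
  proof
    fix k assume "k \<in> K"
    then have k: "k \<ge> 1" "p ^ k < p ^ v" using big unfolding K_def by auto
    then have "k < v" using prime_gt_1_nat[OF p] by (simp add: power_strict_increasing_iff)
    then show "k \<in> {1..v - 1}" using k by simp
  qed
  then have "card K \<le> v - 1" using card_mono[of "{1..v - 1}" K] by simp
  moreover have "v \<ge> 1" using big m by (cases v) auto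
  ultimately show False by linarith
qed

lemma central_binomial_le_power_card_primes:
  assumes m: "m \<ge> 1"
  shows "(2 * m) choose m \<le> (2 * m) ^ card {p. prime p \<and> p \<le> 2 * m}"
proof -
  let ?C = "(2 * m) choose m"
  have "prime_factors ?C \<subseteq> {p. prime p \<and> p \<le> 2 * m}"
  proof
    fix p assume p: "p \<in> prime_factors ?C"
    have "?C dvd fact (2 * m)"
      using binomial_fact_lemma[of m "2 * m"] by (metis dvd_triv_right mult_2 add_diff_cancel_left' le_add2)
    then have "p dvd fact (2 * m)" using p by (auto intro: dvd_trans)
    then show "p \<in> {p. prime p \<and> p \<le> 2 * m}" using p prime_dvd_fact_iff[of p] by auto
  qed
  moreover have "?C = (\<Prod>p\<in>prime_factors ?C. p ^ multiplicity p ?C)"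
    by (rule prime_factorization_nat) simp
  ultimately have "?C \<le> (\<Prod>p\<in>prime_factors ?C. 2 * m)"
    by (metis (no_types, lifting) prod_mono zero_le prime_power_multiplicity_central_binomial_le[OF _ m]
        in_prime_factors_imp_prime)
  also have "\<dots> \<le> (2 * m) ^ card {p. prime p \<and> p \<le> 2 * m}"
    using m \<open>prime_factors ?C \<subseteq> _\<close> by (simp only: prod_constant) (intro power_increasing card_mono, auto)
  finally show ?thesis .
qed

lemma card_primes_ge:
  assumes m: "m \<ge> 1" and cond: "(real n + 1) * ln (2 * real m) \<le> real m * ln 4"
  shows "n \<le> card {p. prime p \<and> p \<le> 2 * m}"
proof -
  define c where "c = card {p. prime p \<and> p \<le> 2 * m}"
  have "4 ^ m / (2 * real m) \<le> real ((2 * m) choose m)"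
    by (rule central_binomial_lower_bound) (use m in simp)
  also have "\<dots> \<le> (2 * real m) ^ c"
    unfolding c_def using central_binomial_le_power_card_primes[OF m]
    by (metis of_nat_le_iff of_nat_mult of_nat_numeral of_nat_power)
  finally have "ln (4 ^ m / (2 * real m)) \<le> ln ((2 * real m) ^ c)"
    using m by (subst ln_le_cancel_iff) auto
  moreover have "ln ((2 * real m) ^ c) = real c * ln (2 * real m)"
    by (rule ln_realpow)
  moreover have "ln (4 ^ m / (2 * real m)) = real m * ln 4 - ln (2 * real m)"
    using m by (simp add: ln_div ln_realpow)
  ultimately have "real m * ln 4 - ln (2 * real m) \<le> real c * ln (2 * real m)"
    by simp
  then have "real n * ln (2 * real m) \<le> real c * ln (2 * real m)"
    using cond by (simp add: algebra_simps)
  then show ?thesis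
    using m unfolding c_def by simp
qed

lemma ln_bounds_ge_7:
  assumes "n \<ge> (7::nat)"
  shows "37 / 21 \<le> ln (real n)" "16 / 37 \<le> ln (ln (real n))" "ln (ln (real n)) \<le> ln (real n) - 1"
proof -
  have "ln (4::real) \<le> ln 7 + 4 / 7 - 1" using ln_le_ln_plus_div_minus_1[of 4 7] by simp
  moreover have "ln (7::real) \<le> ln (real n)" using assms by simp
  ultimately show l: "37 / 21 \<le> ln (real n)" using ln_4_bounds by linarith
  have "ln (1::real) \<le> ln (ln (real n)) + 1 / ln (real n) - 1"
    using ln_le_ln_plus_div_minus_1[of 1 "ln (real n)"] l by simp
  moreover have "1 / ln (real n) \<le> 21 / 37" using l by (simp add: field_simps)
  ultimately show "16 / 37 \<le> ln (ln (real n))" by simp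
  show "ln (ln (real n)) \<le> ln (real n) - 1" using l by (intro ln_le_minus_one) simp
qed

text \<open>A crude form of $p_n \lesssim n(\ln n + \ln\ln n)$ from Chebyshev's lower bound for $\pi$:
  with $m = \lceil 2 n L \rceil$, $L = \ln n + \ln \ln n$, there are at least $n$ primes up to $2m$.\<close>
lemma pr_le:
  assumes n: "n \<ge> (7::nat)"
  shows "real (pr n) \<le> 5 * real n * (ln (real n) + ln (ln (real n)))"
proof -
  define L where "L = ln (real n) + ln (ln (real n))"
  define N where "N = real n * L"
  have "L \<ge> 2" "ln L \<le> ln (2 * ln (real n))"
    using ln_bounds_ge_7[OF n] unfolding L_def by auto
  moreover have "ln (2 * ln (real n)) = ln 2 + ln (ln (real n))"
    using ln_bounds_ge_7(1)[OF n] by (simp add: ln_mult)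
  ultimately have L: "L \<ge> 2" "ln L \<le> ln 2 + ln (ln (real n))"
    by auto
  have rn: "real n \<ge> 7" using n by simp
  have N: "N \<ge> 14" unfolding N_def using L rn mult_mono[of 7 "real n" 2 L] by simp
  define m where "m = nat \<lceil>2 * N\<rceil>"
  have m: "real m \<ge> 2 * N" "real m < 2 * N + 1" "m \<ge> 1" unfolding m_def using N by linarith+
  have "ln (2 * real m) \<le> ln (5 * N)" using m N by simp
  also have "\<dots> = ln 5 + ln (real n) + ln L" unfolding N_def using rn L by (simp add: ln_mult)
  also have "\<dots> \<le> ln 10 + L" using L unfolding L_def by (simp add: ln_mult[of 5 2, simplified])
  finally have l2m: "ln (2 * real m) \<le> ln 10 + L" .
  have ln10: "ln (10::real) \<le> 7 / 3"
    using ln_le_ln_plus_div_minus_1[of 10 8] ln_realpow[of 2 3] ln2_le_25_over_36 by simp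
  have "(real n + 1) * ln (2 * real m) \<le> (8 / 7 * real n) * (ln 10 + L)"
    using l2m rn L ln10 m by (intro mult_mono) (auto simp: ln_ge_zero)
  also have "\<dots> = real n * (8 / 7 * (ln 10 + L))" by simp
  also have "\<dots> \<le> real n * (2 * L * ln 4)"
  proof (intro mult_left_mono)
    have "2 * L * (4 / 3) \<le> 2 * L * ln 4" using L ln_4_bounds by (intro mult_left_mono) auto
    then show "8 / 7 * (ln 10 + L) \<le> 2 * L * ln 4" unfolding distrib_left using L ln10 by linarith
  qed (use rn in auto)
  also have "\<dots> = 2 * N * ln 4" unfolding N_def by simp
  also have "\<dots> \<le> real m * ln 4" using m ln_4_bounds by (intro mult_right_mono) auto
  finally have "n \<le> card {p. prime p \<and> p \<le> 2 * m}" by (rule card_primes_ge[OF m(3)])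
  then have "real (pr n) \<le> 2 * real m" using pr_le_iff_card_primes[of n "2 * m"] n by simp
  then have "real (pr n) \<le> 5 * N" using m N by linarith
  then show ?thesis unfolding N_def L_def by (simp add: mult.assoc)
qed

lemma prod_1_plus_lt_exp_sum:
  fixes x :: "'a \<Rightarrow> real"
  assumes "finite I" "I \<noteq> {}" "\<And>i. i \<in> I \<Longrightarrow> x i > 0"
  shows "(\<Prod>i\<in>I. 1 + x i) < exp (\<Sum>i\<in>I. x i)"
proof -
  have pos: "1 + x i > 0" if "i \<in> I" for i using assms(3)[OF that] by simp
  have "ln (\<Prod>i\<in>I. 1 + x i) = (\<Sum>i\<in>I. ln (1 + x i))"
    by (rule ln_prod[OF assms(1)]) (use pos in force)
  also have "\<dots> < (\<Sum>i\<in>I. x i)"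
    using assms by (intro sum_strict_mono ln_add_one_self_less_self) auto
  finally have "ln (\<Prod>i\<in>I. 1 + x i) < (\<Sum>i\<in>I. x i)" .
  moreover have "0 < (\<Prod>i\<in>I. 1 + x i)"
    using pos by (simp add: prod_pos)
  ultimately show ?thesis
    by (metis exp_less_cancel_iff exp_ln)
qed

lemma A_prod_lt_exp:
  assumes "1 \<le> j" "j \<le> k + 1" "k \<ge> 1"
  shows "A_prod j k < exp (prime_recip_sum (pr (k + 1)) - 1 / real (pr j))"
proof -
  define I where "I = {1..k + 1} - {j}"
  have pr_pos: "real (pr l) > 0" for l using prime_gt_0_nat[OF prime_pr[of l]] by simp
  have "(if j = 1 then 2 else 1) \<in> I" unfolding I_def using assms by auto
  then have "I \<noteq> {}" by auto
  have "A_prod j k = (\<Prod>l\<in>I. 1 + 1 / real (pr l))"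
    unfolding A_prod_def I_def using pr_pos by (intro prod.cong) (auto simp: field_simps)
  also have "\<dots> < exp (\<Sum>l\<in>I. 1 / real (pr l))"
    using \<open>I \<noteq> {}\<close> pr_pos by (intro prod_1_plus_lt_exp_sum) (auto simp: I_def)
  also have "(\<Sum>l\<in>I. 1 / real (pr l)) = prime_recip_sum (pr (k + 1)) - 1 / real (pr j)"
    using assms by (simp add: I_def prime_recip_sum_pr sum_diff1)
  finally show ?thesis .
qed

lemma mertens_delta_le:
  assumes x: "x \<ge> 17"
  shows "mertens_delta x \<le> 27 / 10" "mertens_delta x \<le> ln x"
proof -
  have ln16: "ln (16::real) = 4 * ln 2" using ln_realpow[of 2 4] by simp
  have "109 / 40 \<le> ln (17::real)" "ln (17::real) \<le> 57 / 20"
    using ln_le_ln_plus_div_minus_1[of 16 17] ln_le_ln_plus_div_minus_1[of 17 16] ln16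
      ln2_ge_two_thirds ln2_le_25_over_36 by simp_all
  moreover have "ln 17 \<le> ln x" using x by simp
  ultimately have lx: "109 / 40 \<le> ln x" by linarith
  have "ln x \<le> ln 17 + x / 17 - 1" using ln_le_ln_plus_div_minus_1[of x 17] x by simp
  then have "(1 + ln x) / x \<le> (ln 17 + x / 17) / x" using x by (intro divide_right_mono) auto
  also have "\<dots> = ln 17 / x + 1 / 17" using x by (simp add: field_simps)
  also have "ln 17 / x \<le> ln 17 / 17" using x \<open>109 / 40 \<le> ln 17\<close> by (intro divide_left_mono) auto
  finally have "(1 + ln x) / x \<le> 77 / 340" using \<open>ln 17 \<le> 57 / 20\<close> by linarith
  moreover have "16 * (109 / 40) \<le> (x - 1) * ln x" using x lx by (intro mult_mono) auto
  then have "1 / ((x - 1) * ln x) \<le> 5 / 218" by (simp add: field_simps)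
  ultimately show "mertens_delta x \<le> 27 / 10"
    unfolding mertens_delta_def using ln_4_bounds by linarith
  then show "mertens_delta x \<le> ln x" using lx by linarith
qed

text \<open>In the application $u = \ln p_n$, $v = \ln(n(\ln n + \ln\ln n))$ and $d$ is the error term
  of Mertens' theorem at $p_n$; the condition $u - v + d \le 5$ holds because $p_n \le 5 e^v$.\<close>
lemma ln_add_div_le_ln_add_div:
  fixes u v w d :: real
  assumes "0 < u" "0 < w" "w \<le> v" "0 \<le> d" "d \<le> u" "d \<le> 5" "u - v + d \<le> 5"
  shows "ln u + d / u \<le> ln v + 5 / w"
proof -
  have ln_u: "ln u \<le> ln v + u / v - 1" using ln_le_ln_plus_div_minus_1[of u v] assms by simp
  have "5 / v \<le> 5 / w" using assms by (intro divide_left_mono) auto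
  moreover have "u / v - 1 + d / u \<le> 5 / v"
  proof (cases "u \<le> v")
    case True
    have "0 \<le> (u - d) * (v - u) + u * (5 - d)"
      using assms True by (intro add_nonneg_nonneg mult_nonneg_nonneg) auto
    then have "d * v \<le> u * v - u * u + 5 * u" by (simp add: algebra_simps)
    then have "(d * v) / (u * v) \<le> (u * v - u * u + 5 * u) / (u * v)"
      using assms by (intro divide_right_mono) auto
    moreover have "(d * v) / (u * v) = d / u" "(u * v - u * u + 5 * u) / (u * v) = 1 - u / v + 5 / v"
      using assms by (simp_all add: field_simps)
    ultimately show ?thesis by linarith
  next
    case False
    then have "d / u \<le> d / v" using assms by (intro divide_left_mono) auto
    moreover have "u / v - 1 + d / v = (u - v + d) / v" using assms by (simp add: field_simps)
    moreover have "(u - v + d) / v \<le> 5 / v" using assms by (intro divide_right_mono) auto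
    ultimately show ?thesis by linarith
  qed
  ultimately show ?thesis using ln_u by linarith
qed

lemma prime_recip_sum_pr_le:
  assumes n: "n \<ge> 7"
  defines "N \<equiv> real n * (ln (real n) + ln (ln (real n)))"
    and "M \<equiv> real n * (ln (real n) + ln (ln (real n)) - 1)"
  shows "exp (prime_recip_sum (pr n)) \<le> ln N * exp (mertens_c1 + 5 / ln M)"
proof -
  define u where "u = ln (real (pr n))"
  define d where "d = mertens_delta (real (pr n))"
  have x: "real (pr n) \<ge> 17" using pr_ge_17[OF n] by simp
  have "7 * 1 \<le> M" unfolding M_def using n ln_bounds_ge_7[OF n] by (intro mult_mono) auto
  moreover have "M \<le> N" unfolding M_def N_def by (intro mult_left_mono) auto
  ultimately have w: "0 < ln M" "ln M \<le> ln N" by simp_all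
  have "u \<le> ln (5 * N)" unfolding u_def using pr_le[OF n] x by (simp add: N_def mult.assoc)
  also have "\<dots> = ln 5 + ln N" using \<open>7 * 1 \<le> M\<close> \<open>M \<le> N\<close> by (simp add: ln_mult)
  also have "ln (5::real) \<le> 2 * ln 2 + 1 / 4"
    using ln_le_ln_plus_div_minus_1[of 5 4] ln_realpow[of 2 2] by simp
  finally have "u - ln N + d \<le> 5"
    using mertens_delta_le(1)[OF x] ln2_le_25_over_36 unfolding d_def by linarith
  moreover have "d \<le> u" "d \<le> 27 / 10"
    using mertens_delta_le[OF x] unfolding u_def d_def by auto
  moreover have "0 < u" "0 \<le> d"
    using x ln_4_bounds unfolding u_def d_def mertens_delta_def by (auto intro!: add_nonneg_nonneg)
  ultimately have "ln u + d / u \<le> ln (ln N) + 5 / ln M"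
    using w by (intro ln_add_div_le_ln_add_div) auto
  moreover have "prime_recip_sum (pr n) \<le> ln u + mertens_c1 + d / u"
    using prime_recip_sum_le[of "pr n"] x unfolding u_def d_def by simp
  ultimately have "prime_recip_sum (pr n) \<le> ln (ln N) + (mertens_c1 + 5 / ln M)" by linarith
  then have "exp (prime_recip_sum (pr n)) \<le> exp (ln (ln N) + (mertens_c1 + 5 / ln M))"
    by simp
  also have "\<dots> = ln N * exp (mertens_c1 + 5 / ln M)"
    using w(1,2) by (simp add: exp_add del: ln_le_cancel_iff)
  finally show ?thesis .
qed

theorem mainTheorem9:
  fixes j k :: nat
  assumes "j \<ge> 1" and "k \<ge> 6" and "k + 1 \<ge> j"
  shows "A_prod j k < C_bound j k"
proof -
  define n where "n = k + 1"
  define p where "p = real (pr j)"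
  have n: "n \<ge> 7" "real k + 1 = real n" using assms by (simp_all add: n_def)
  have "A_prod j k < exp (prime_recip_sum (pr n) - 1 / p)"
    using A_prod_lt_exp[of j k] assms by (simp add: n_def p_def)
  also have "\<dots> = exp (prime_recip_sum (pr n)) / exp (1 / p)"
    by (rule exp_diff)
  also have "\<dots> \<le> ln (real n * (ln (real n) + ln (ln (real n))))
      * exp (mertens_c1 + 5 / ln (real n * (ln (real n) + ln (ln (real n)) - 1))) / exp (1 / p)"
    by (rule divide_right_mono[OF prime_recip_sum_pr_le[OF n(1)]]) simp
  also have "\<dots> = C_bound j k"
  proof -
    have "exp (mertens_c1 - 1 / p + 5 / ln (real n * (ln (real n) + ln (ln (real n)) - 1)))
        = exp (mertens_c1 + 5 / ln (real n * (ln (real n) + ln (ln (real n)) - 1))) / exp (1 / p)"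
      by (simp add: exp_diff[symmetric] diff_add_eq)
    then show ?thesis
      unfolding C_bound_def n(2) p_def[symmetric] by simp
  qed
  finally show ?thesis .
qed

end
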